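(* Let $S=\langle \underline{S},\sqcap,\sqcup,\Rightarrow,L,\neg,0,1\rangle$ be a finite rough algebra (as arises from a finite approximation space), let $M(x)=\neg L(\neg x)$, and let $T$ be the coapproximability relation on $S$: $(a,b)\in T$ iff there exists $c\in\underline{S}$ with $L(c)\le a\le M(c)$ and $L(c)\le b\le M(c)$. Then every block $B=\{a_i\}$ of $T$ is an interval of the lattice $\langle\underline{S},\sqcap,\sqcup\rangle$ of the form $[\bigwedge a_i,\bigvee a_i]=\{x\in\underline{S}:\bigwedge_i a_i\le x\le\bigvee_i a_i\}$.
   Context: A pre-rough algebra is an algebra $\langle\underline{S},\sqcap,\sqcup,\Rightarrow,L,\neg,0,1\rangle$ of type $(2,2,2,1,1,0,0)$ such that: $\langle\underline{S},\sqcap,\sqcup,\neg\rangle$ is a de Morgan lattice (with bounds $0,1$); $\neg\neg a=a$; $L(a)\sqcap a=L(a)$; $LL(a)=L(a)$; $L(1)=1$; $L(a\sqcap b)=L(a)\sqcap L(b)$; $\neg L\neg L(a)=L(a)$; $\neg L(a)\sqcup L(a)=1$; $L(a\sqcup b)=L(a)\sqcup L(b)$; if $L(a)\sqcap L(b)=L(a)$ and $\neg L(\neg(a\sqcap b))=\neg L(\neg a)$ then $a\sqcap b=a$; and $a\Rightarrow b=(\neg L(a)\sqcup L(b))\sqcap(L(\neg a)\sqcup\neg L(\neg b))$. A rough algebra is a completely distributive pre-rough algebra. For a reflexive symmetric relation $T$ on a set $H$, a block of $T$ is a maximal subset $B\subseteq H$ with $B\times B\subseteq T$. Meets and joins $\bigwedge,\bigvee$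 are taken in the lattice $\langle\underline{S},\sqcap,\sqcup\rangle$. *)

theory Defs
  imports Main
begin

text \<open>Algebras are given on the whole (finite) type 'a, with explicit operations
  meet (\<sqinter>), join (\<sqcup>), imp (\<Rightarrow>), L, neg (\<not>), zero, one.\<close>

definition lle :: "('a \<Rightarrow> 'a \<Rightarrow> 'a) \<Rightarrow> 'a \<Rightarrow> 'a \<Rightarrow> bool" where
  "lle meet a b \<longleftrightarrow> meet a b = a"

definition is_glb :: "('a \<Rightarrow> 'a \<Rightarrow> 'a) \<Rightarrow> 'a set \<Rightarrow> 'a \<Rightarrow> bool" where
  "is_glb meet X g \<longleftrightarrow> (\<forall>x\<in>X. lle meet g x) \<and> (\<forall>y. (\<forall>x\<in>X. lle meet y x) \<longrightarrow> lle meet y g)"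

definition is_lub :: "('a \<Rightarrow> 'a \<Rightarrow> 'a) \<Rightarrow> 'a set \<Rightarrow> 'a \<Rightarrow> bool" where
  "is_lub meet X s \<longleftrightarrow> (\<forall>x\<in>X. lle meet x s) \<and> (\<forall>y. (\<forall>x\<in>X. lle meet x y) \<longrightarrow> lle meet s y)"

definition de_morgan_lattice ::
  "('a \<Rightarrow> 'a \<Rightarrow> 'a) \<Rightarrow> ('a \<Rightarrow> 'a \<Rightarrow> 'a) \<Rightarrow> ('a \<Rightarrow> 'a) \<Rightarrow> 'a \<Rightarrow> 'a \<Rightarrow> bool" where
  "de_morgan_lattice meet join neg zero one \<longleftrightarrow>
     (\<forall>a b c. meet (meet a b) c = meet a (meet b c)) \<and>
     (\<forall>a b c. join (join a b) c = join a (join b c)) \<and>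
     (\<forall>a b. meet a b = meet b a) \<and>
     (\<forall>a b. join a b = join b a) \<and>
     (\<forall>a b. meet a (join a b) = a) \<and>
     (\<forall>a b. join a (meet a b) = a) \<and>
     (\<forall>a b c. meet a (join b c) = join (meet a b) (meet a c)) \<and>
     (\<forall>a. meet a zero = zero) \<and>
     (\<forall>a. join a one = one) \<and>
     (\<forall>a b. neg (join a b) = meet (neg a) (neg b)) \<and>
     (\<forall>a. neg (neg a) = a)"

definition pre_rough_algebra ::
  "('a \<Rightarrow> 'a \<Rightarrow> 'a) \<Rightarrow> ('a \<Rightarrow> 'a \<Rightarrow> 'a) \<Rightarrow> ('a \<Rightarrow> 'a \<Rightarrow> 'a) \<Rightarrow> ('a \<Rightarrow> 'a) \<Rightarrow> ('a \<Rightarrow> 'a)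
     \<Rightarrow> 'a \<Rightarrow> 'a \<Rightarrow> bool" where
  "pre_rough_algebra meet join imp L neg zero one \<longleftrightarrow>
     de_morgan_lattice meet join neg zero one \<and>
     (\<forall>a. neg (neg a) = a) \<and>
     (\<forall>a. meet (L a) a = L a) \<and>
     (\<forall>a. L (L a) = L a) \<and>
     L one = one \<and>
     (\<forall>a b. L (meet a b) = meet (L a) (L b)) \<and>
     (\<forall>a. neg (L (neg (L a))) = L a) \<and>
     (\<forall>a. join (neg (L a)) (L a) = one) \<and>
     (\<forall>a b. L (join a b) = join (L a) (L b)) \<and>
     (\<forall>a b. meet (L a) (L b) = L a \<and> neg (L (neg (meet a b))) = neg (L (neg a))
              \<longrightarrow> meet a b = a) \<and>
     (\<forall>a b. imp a b = meet (join (neg (L a)) (L b)) (join (L (neg a)) (neg (L (neg b)))))"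

definition completely_distributive :: "('a \<Rightarrow> 'a \<Rightarrow> 'a) \<Rightarrow> bool" where
  "completely_distributive meet \<longleftrightarrow>
     (\<forall>X. \<exists>g. is_glb meet X g) \<and> (\<forall>X. \<exists>s. is_lub meet X s) \<and>
     (\<forall>\<A> :: 'a set set. \<forall>m sups.
        (\<forall>A\<in>\<A>. is_lub meet A (sups A)) \<and> is_glb meet (sups ` \<A>) m \<longrightarrow>
        is_lub meet {g. \<exists>f. (\<forall>A\<in>\<A>. f A \<in> A) \<and> is_glb meet (f ` \<A>) g} m) \<and>
     (\<forall>\<A> :: 'a set set. \<forall>m infs.
        (\<forall>A\<in>\<A>. is_glb meet A (infs A)) \<and> is_lub meet (infs ` \<A>) m \<longrightarrow>
        is_glb meet {s. \<exists>f. (\<forall>A\<in>\<A>. f A \<in> A) \<and> is_lub meet (f ` \<A>) s} m)"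

definition rough_algebra ::
  "('a \<Rightarrow> 'a \<Rightarrow> 'a) \<Rightarrow> ('a \<Rightarrow> 'a \<Rightarrow> 'a) \<Rightarrow> ('a \<Rightarrow> 'a \<Rightarrow> 'a) \<Rightarrow> ('a \<Rightarrow> 'a) \<Rightarrow> ('a \<Rightarrow> 'a)
     \<Rightarrow> 'a \<Rightarrow> 'a \<Rightarrow> bool" where
  "rough_algebra meet join imp L neg zero one \<longleftrightarrow>
     pre_rough_algebra meet join imp L neg zero one \<and> completely_distributive meet"

definition coapprox :: "('a \<Rightarrow> 'a \<Rightarrow> 'a) \<Rightarrow> ('a \<Rightarrow> 'a) \<Rightarrow> ('a \<Rightarrow> 'a) \<Rightarrow> 'a rel" where
  "coapprox meet L neg = {(a, b). \<exists>c.
      lle meet (L c) a \<and> lle meet a (neg (L (neg c))) \<and>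
      lle meet (L c) b \<and> lle meet b (neg (L (neg c)))}"

definition is_block :: "'a set \<Rightarrow> 'a rel \<Rightarrow> 'a set \<Rightarrow> bool" where
  "is_block H T B \<longleftrightarrow> B \<subseteq> H \<and> B \<times> B \<subseteq> T \<and>
     (\<forall>B'. B \<subseteq> B' \<and> B' \<subseteq> H \<and> B' \<times> B' \<subseteq> T \<longrightarrow> B' = B)"

end

theory Submission
  imports Defs
begin

text \<open>If \<open>a\<close> and \<open>b\<close> are coapproximated by \<open>c\<close>, then \<open>d = c \<sqinter> \<not>L c\<close> is a boundary element
  (\<open>L d = 0\<close>) with \<open>a \<le> M c = (M c \<sqinter> \<not>L c) \<squnion> L c \<le> M d \<squnion> L b\<close>. Joining such boundary
  elements over all pairs of the finite block \<open>B\<close> gives one \<open>z\<close> with \<open>L z = 0\<close> and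
  \<open>a \<le> M z \<squnion> L b\<close> for all \<open>a, b \<in> B\<close>; by distributivity \<open>c = z \<squnion> \<Sqinter>\<^sub>b L b\<close> then satisfies
  \<open>L c \<le> a \<le> M c\<close> for every \<open>a \<in> B\<close>. So \<open>c\<close> also approximates every element of the
  interval \<open>[\<Sqinter>B, \<Squnion>B]\<close>, which is therefore pairwise coapproximable, and maximality of the
  block forces \<open>B\<close> to be this interval.\<close>

text \<open>Only the pre-rough algebra axioms used below.\<close>

locale pre_rough =
  fixes meet join :: "'a \<Rightarrow> 'a \<Rightarrow> 'a" and L neg :: "'a \<Rightarrow> 'a" and zero one :: 'a
  assumes meet_assoc: "\<And>a b c. meet (meet a b) c = meet a (meet b c)"
    and join_assoc: "\<And>a b c. join (join a b) c = join a (join b c)"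
    and meet_comm: "\<And>a b. meet a b = meet b a"
    and join_comm: "\<And>a b. join a b = join b a"
    and meet_absorb: "\<And>a b. meet a (join a b) = a"
    and join_absorb: "\<And>a b. join a (meet a b) = a"
    and meet_join_distrib: "\<And>a b c. meet a (join b c) = join (meet a b) (meet a c)"
    and meet_zero: "\<And>a. meet a zero = zero"
    and join_one: "\<And>a. join a one = one"
    and neg_join: "\<And>a b. neg (join a b) = meet (neg a) (neg b)"
    and neg_neg: "\<And>a. neg (neg a) = a"
    and meet_L_self: "\<And>a. meet (L a) a = L a"
    and L_idem: "\<And>a. L (L a) = L a"
    and L_meet: "\<And>a b. L (meet a b) = meet (L a) (L b)"
    and neg_L_neg_L: "\<And>a. neg (L (neg (L a))) = L a"
    and join_neg_L_L: "\<And>a. join (neg (L a)) (L a) = one"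
    and L_join: "\<And>a b. L (join a b) = join (L a) (L b)"
begin

abbreviation leq :: "'a \<Rightarrow> 'a \<Rightarrow> bool" (infix "\<sqsubseteq>" 50)
  where "a \<sqsubseteq> b \<equiv> lle meet a b"

sublocale lat: distrib_lattice meet "(\<sqsubseteq>)" "\<lambda>x y. x \<sqsubseteq> y \<and> x \<noteq> y" join
proof -
  have join_eq_iff: "join a b = b \<longleftrightarrow> meet a b = a" for a b
    by (metis meet_absorb join_absorb meet_comm join_comm)
  interpret lattice meet "(\<sqsubseteq>)" "\<lambda>x y. x \<sqsubseteq> y \<and> x \<noteq> y" join
  proof
    fix x y z
    show "(x \<sqsubseteq> y \<and> x \<noteq> y) = (x \<sqsubseteq> y \<and> \<not> y \<sqsubseteq> x)"
      unfolding lle_def by (metis meet_comm)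
    show "x \<sqsubseteq> x" unfolding lle_def by (metis meet_absorb join_absorb)
    show "x \<sqsubseteq> y \<Longrightarrow> y \<sqsubseteq> z \<Longrightarrow> x \<sqsubseteq> z" unfolding lle_def by (metis meet_assoc)
    show "x \<sqsubseteq> y \<Longrightarrow> y \<sqsubseteq> x \<Longrightarrow> x = y" unfolding lle_def by (metis meet_comm)
    show "meet x y \<sqsubseteq> x" unfolding lle_def by (metis meet_assoc meet_comm meet_absorb join_absorb)
    show "meet x y \<sqsubseteq> y" unfolding lle_def by (metis meet_assoc meet_absorb join_absorb)
    show "x \<sqsubseteq> y \<Longrightarrow> x \<sqsubseteq> z \<Longrightarrow> x \<sqsubseteq> meet y z" unfolding lle_def by (metis meet_assoc)
    show "x \<sqsubseteq> join x y" unfolding lle_def by (metis meet_absorb)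
    show "y \<sqsubseteq> join x y" unfolding lle_def by (metis meet_absorb join_comm)
    show "y \<sqsubseteq> x \<Longrightarrow> z \<sqsubseteq> x \<Longrightarrow> join y z \<sqsubseteq> x"
      unfolding lle_def by (metis join_eq_iff join_assoc)
  qed
  show "class.distrib_lattice meet (\<sqsubseteq>) (\<lambda>x y. x \<sqsubseteq> y \<and> x \<noteq> y) join"
    by (intro class.distrib_lattice.intro class.distrib_lattice_axioms.intro
        lattice_axioms distrib_imp1 meet_join_distrib)
qed

lemma le_one: "a \<sqsubseteq> one"
  unfolding lle_def by (metis join_one meet_absorb)

lemma neg_meet: "neg (meet a b) = join (neg a) (neg b)"
  by (metis neg_join neg_neg)

lemma neg_antimono: "a \<sqsubseteq> b \<Longrightarrow> neg b \<sqsubseteq> neg a"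
  by (metis lat.inf.absorb_iff2 lat.sup.absorb_iff2 neg_join)

lemma zero_le: "zero \<sqsubseteq> a"
  unfolding lle_def by (metis meet_comm meet_zero)

lemma L_le: "L a \<sqsubseteq> a"
  unfolding lle_def by (rule meet_L_self)

lemma L_mono: "a \<sqsubseteq> b \<Longrightarrow> L a \<sqsubseteq> L b"
  unfolding lle_def by (metis L_meet)

lemma L_zero: "L zero = zero"
  by (metis meet_L_self meet_zero)

lemma L_neg_L: "L (neg (L a)) = neg (L a)"
  by (metis neg_L_neg_L neg_neg)

lemma neg_one: "neg one = zero"
proof -
  have "neg one = neg (join (neg zero) one)" by (simp only: join_one)
  also have "\<dots> = meet (neg one) zero" by (simp only: neg_join neg_neg meet_comm)
  also have "\<dots> = zero" by (rule meet_zero)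
  finally show ?thesis .
qed

lemma meet_L_neg_L: "meet (L a) (neg (L a)) = zero"
proof -
  have "meet (L a) (neg (L a)) = neg (join (neg (L a)) (L a))"
    by (simp only: neg_join neg_neg)
  then show ?thesis by (simp only: join_neg_L_L neg_one)
qed

definition M :: "'a \<Rightarrow> 'a" where
  "M x = neg (L (neg x))"

lemma M_join: "M (join a b) = join (M a) (M b)"
  unfolding M_def by (simp only: neg_join L_meet neg_meet)

lemma M_meet: "M (meet a b) = meet (M a) (M b)"
  unfolding M_def by (simp only: neg_join L_join neg_meet)

lemma le_M: "a \<sqsubseteq> M a"
  unfolding M_def by (metis L_le neg_antimono neg_neg)

lemma M_neg_L: "M (neg (L a)) = neg (L a)"
  unfolding M_def by (metis neg_neg L_idem)

lemma M_eq_boundary_join_L: "M c = join (meet (M c) (neg (L c))) (L c)"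
proof -
  have "join (meet (M c) (neg (L c))) (L c) = meet (join (M c) (L c)) (join (neg (L c)) (L c))"
    by (metis lat.sup_inf_distrib1 join_comm)
  also have "\<dots> = M c"
    using join_neg_L_L le_one lat.inf.absorb1 lat.sup.absorb1 L_le le_M lat.order_trans
    by metis
  finally show ?thesis ..
qed

lemma coapprox_boundary_bound:
  assumes "(a, b) \<in> coapprox meet L neg"
  shows "\<exists>d. L d = zero \<and> a \<sqsubseteq> join (M d) (L b)"
proof -
  from assms obtain c where "L c \<sqsubseteq> b" "a \<sqsubseteq> M c"
    unfolding coapprox_def M_def by blast
  define d where "d = meet c (neg (L c))"
  have "L d = zero"
    unfolding d_def L_meet L_neg_L by (rule meet_L_neg_L)
  moreover have "M c \<sqsubseteq> join (M d) (L b)"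
    using M_eq_boundary_join_L[of c] \<open>L c \<sqsubseteq> b\<close> L_mono[of "L c" b]
    unfolding d_def M_meet M_neg_L L_idem by (metis lat.sup_mono lat.order_refl)
  ultimately show ?thesis
    using \<open>a \<sqsubseteq> M c\<close> lat.order_trans by blast
qed

lemma coapprox_common_boundary_bound:
  assumes "finite Q" and "Q \<subseteq> coapprox meet L neg"
  shows "\<exists>z. L z = zero \<and> (\<forall>(a, b) \<in> Q. a \<sqsubseteq> join (M z) (L b))"
  using assms
proof (induction Q rule: finite_induct)
  case empty
  show ?case using L_zero by blast
next
  case (insert p Q)
  then obtain z where z: "L z = zero" "\<forall>(a, b) \<in> Q. a \<sqsubseteq> join (M z) (L b)"
    by blast
  obtain a b where p: "p = (a, b)" by fastforce
  with insert.prems obtain d where d: "L d = zero" "a \<sqsubseteq> join (M d) (L b)"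
    using coapprox_boundary_bound by blast
  have "L (join z d) = zero"
    using z(1) d(1) L_join lat.sup.idem by simp
  moreover have "a' \<sqsubseteq> join (M (join z d)) (L b')" if "(a', b') \<in> insert p Q" for a' b'
  proof -
    have "a' \<sqsubseteq> join (M z) (L b') \<or> a' \<sqsubseteq> join (M d) (L b')"
      using that z(2) d(2) p by auto
    moreover have "join (M z) (L b') \<sqsubseteq> join (M (join z d)) (L b')"
      "join (M d) (L b') \<sqsubseteq> join (M (join z d)) (L b')"
      unfolding M_join by (meson lat.sup_mono lat.sup_ge1 lat.sup_ge2 lat.order_refl)+
    ultimately show ?thesis by (meson lat.order_trans)
  qed
  ultimately show ?case by blast
qed

lemma coapprox_common_approximation:
  assumes "finite B" and "B \<times> B \<subseteq> coapprox meet L neg"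
  shows "\<exists>c. \<forall>a \<in> B. L c \<sqsubseteq> a \<and> a \<sqsubseteq> M c"
proof (cases "B = {}")
  case False
  have "finite (B \<times> B)" using assms(1) by simp
  then obtain z where z: "L z = zero" "\<forall>(a, b) \<in> B \<times> B. a \<sqsubseteq> join (M z) (L b)"
    using coapprox_common_boundary_bound assms(2) by blast
  define m where "m = lat.Inf_fin (L ` B)"
  have fin: "finite (L ` B)" "L ` B \<noteq> {}"
    using assms(1) False by simp_all
  have "L (join z m) \<sqsubseteq> a" if "a \<in> B" for a
  proof -
    have "L (join z m) = L m"
      unfolding L_join z(1) by (rule lat.sup_absorb2) (rule zero_le)
    also have "\<dots> \<sqsubseteq> m" by (rule L_le)
    also have "m \<sqsubseteq> L a"
      unfolding m_def using fin that by (blast intro: lat.Inf_fin.coboundedI)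
    also have "L a \<sqsubseteq> a" by (rule L_le)
    finally show ?thesis .
  qed
  moreover have "a \<sqsubseteq> M (join z m)" if "a \<in> B" for a
  proof -
    have "join (M z) m = lat.Inf_fin (join (M z) ` L ` B)"
      unfolding m_def using fin by (intro lat.Inf_fin.hom_commute lat.sup_inf_distrib1)
    moreover have "a \<sqsubseteq> join (M z) (L b)" if "b \<in> B" for b
      using z(2) \<open>a \<in> B\<close> that by blast
    ultimately have "a \<sqsubseteq> join (M z) m"
      using fin by (simp add: lat.Inf_fin.bounded_iff)
    also have "join (M z) m \<sqsubseteq> M (join z m)"
      unfolding M_join by (intro lat.sup_mono lat.order_refl le_M)
    finally show ?thesis .
  qed
  ultimately show ?thesis by blast
qed simp

lemma coapprox_if_common_approximation:
  assumes "\<forall>x \<in> X. L c \<sqsubseteq> x \<and> x \<sqsubseteq> M c"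
  shows "X \<times> X \<subseteq> coapprox meet L neg"
  using assms unfolding coapprox_def M_def by blast

end

lemma pre_rough_if_pre_rough_algebra:
  assumes "pre_rough_algebra meet join imp L neg zero one"
  shows "pre_rough meet join L neg zero one"
  using assms unfolding pre_rough_algebra_def de_morgan_lattice_def pre_rough_def
  by (elim conjE) (intro conjI; assumption)

theorem proposition2p2:
  fixes meet join imp :: "'a \<Rightarrow> 'a \<Rightarrow> 'a" and L neg :: "'a \<Rightarrow> 'a" and zero one :: 'a
  assumes "finite (UNIV :: 'a set)"
    and "rough_algebra meet join imp L neg zero one"
    and "is_block UNIV (coapprox meet L neg) B"
  shows "\<exists>g s. is_glb meet B g \<and> is_lub meet B s \<and> B = {x. lle meet g x \<and> lle meet x s}"
proof -
  have "pre_rough_algebra meet join imp L neg zero one" "completely_distributive meet"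
    using assms(2) unfolding rough_algebra_def by simp_all
  then interpret pre_rough meet join L neg zero one
    by (intro pre_rough_if_pre_rough_algebra)
  obtain g s where g: "is_glb meet B g" and s: "is_lub meet B s"
    using \<open>completely_distributive meet\<close> unfolding completely_distributive_def by meson
  have block: "B \<times> B \<subseteq> coapprox meet L neg"
    "\<And>B'. B \<subseteq> B' \<Longrightarrow> B' \<times> B' \<subseteq> coapprox meet L neg \<Longrightarrow> B' = B"
    using assms(3) unfolding is_block_def by auto
  obtain c where c: "\<forall>a \<in> B. L c \<sqsubseteq> a \<and> a \<sqsubseteq> M c"
    using coapprox_common_approximation[OF finite_subset[OF subset_UNIV assms(1)] block(1)] by blast
  define I where "I = {x. g \<sqsubseteq> x \<and> x \<sqsubseteq> s}"
  have "B \<subseteq> I"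
    using g s unfolding I_def is_glb_def is_lub_def by blast
  moreover have "L c \<sqsubseteq> g" "s \<sqsubseteq> M c"
    using c g s unfolding is_glb_def is_lub_def by auto
  then have "I \<times> I \<subseteq> coapprox meet L neg"
    unfolding I_def by (intro coapprox_if_common_approximation) (blast intro: lat.order_trans)
  ultimately have "B = I" by (intro block(2)[symmetric])
  with g s show ?thesis unfolding I_def by blast
qed

end
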